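(* Let $n\le 4$ and let $S$ be a real symmetric positive-definite $n\times n$ matrix. Then $S$ is Venkov-reduced with respect to $I_n$, i.e. $S\bullet I_n\le (gSg^{T})\bullet I_n$ for all $g\in GL_n(\mathbb Z)$, if and only if $gSg^{T}$ is Minkowski-reduced for some permutation matrix $g\in GL_n(\mathbb Z)$.
   Context: $S\bullet T:=\mathrm{Trace}(ST)$ for symmetric matrices $S,T$. Let $\mathbf e_1,\dots,\mathbf e_n$ be the standard basis of $\mathbb R^n$; a set $\{v_1,\dots,v_i\}\subset\mathbb Z^n$ is primitive if it is a subset of a basis of $\mathbb Z^n$. A symmetric positive-definite $S=(s_{ij})$ is Minkowski-reduced if for each $i=1,\dots,n$, $s_{ii}=\min\{v^{T}Sv: \{\mathbf e_1,\dots,\mathbf e_{i-1},v\}\text{ is a primitive set of }\mathbb Z^n\}$. *)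

theory Defs
  imports Complex_Main "HOL-Combinatorics.Permutations"
begin

text \<open>Matrices of size n x n are represented as functions nat => nat => real,
  only the entries with indices < n being relevant; indices run over 0..n-1,
  so index i corresponds to the paper's index i+1.\<close>

definition trace_n :: "nat \<Rightarrow> (nat \<Rightarrow> nat \<Rightarrow> real) \<Rightarrow> real" where
  "trace_n n A = (\<Sum>i<n. A i i)"

definition symmetric_n :: "nat \<Rightarrow> (nat \<Rightarrow> nat \<Rightarrow> real) \<Rightarrow> bool" where
  "symmetric_n n S \<longleftrightarrow> (\<forall>i<n. \<forall>j<n. S i j = S j i)"

definition qform :: "nat \<Rightarrow> (nat \<Rightarrow> nat \<Rightarrow> real) \<Rightarrow> (nat \<Rightarrow> real) \<Rightarrow> real" where
  "qform n S v = (\<Sum>i<n. \<Sum>j<n. v i * S i j * v j)"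

definition posdef_n :: "nat \<Rightarrow> (nat \<Rightarrow> nat \<Rightarrow> real) \<Rightarrow> bool" where
  "posdef_n n S \<longleftrightarrow> (\<forall>v. (\<exists>i<n. v i \<noteq> 0) \<longrightarrow> qform n S v > 0)"

definition mat_mult_n :: "nat \<Rightarrow> (nat \<Rightarrow> nat \<Rightarrow> real) \<Rightarrow> (nat \<Rightarrow> nat \<Rightarrow> real) \<Rightarrow> nat \<Rightarrow> nat \<Rightarrow> real" where
  "mat_mult_n n A B = (\<lambda>i j. \<Sum>k<n. A i k * B k j)"

definition transpose_n :: "(nat \<Rightarrow> nat \<Rightarrow> real) \<Rightarrow> nat \<Rightarrow> nat \<Rightarrow> real" where
  "transpose_n A = (\<lambda>i j. A j i)"

definition congr_n :: "nat \<Rightarrow> (nat \<Rightarrow> nat \<Rightarrow> real) \<Rightarrow> (nat \<Rightarrow> nat \<Rightarrow> real) \<Rightarrow> nat \<Rightarrow> nat \<Rightarrow> real" where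
  "congr_n n g S = mat_mult_n n (mat_mult_n n g S) (transpose_n g)"

definition is_identity_n :: "nat \<Rightarrow> (nat \<Rightarrow> nat \<Rightarrow> real) \<Rightarrow> bool" where
  "is_identity_n n A \<longleftrightarrow> (\<forall>i<n. \<forall>j<n. A i j = (if i = j then 1 else 0))"

definition int_matrix_n :: "nat \<Rightarrow> (nat \<Rightarrow> nat \<Rightarrow> real) \<Rightarrow> bool" where
  "int_matrix_n n g \<longleftrightarrow> (\<forall>i<n. \<forall>j<n. g i j \<in> \<int>)"

definition GL_Z :: "nat \<Rightarrow> (nat \<Rightarrow> nat \<Rightarrow> real) \<Rightarrow> bool" where
  "GL_Z n g \<longleftrightarrow> int_matrix_n n g \<and>
     (\<exists>h. int_matrix_n n h \<and> is_identity_n n (mat_mult_n n g h) \<and> is_identity_n n (mat_mult_n n h g))"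

definition perm_matrix_n :: "nat \<Rightarrow> (nat \<Rightarrow> nat \<Rightarrow> real) \<Rightarrow> bool" where
  "perm_matrix_n n g \<longleftrightarrow> (\<exists>\<sigma>. \<sigma> permutes {..<n} \<and>
     (\<forall>i<n. \<forall>j<n. g i j = (if \<sigma> i = j then 1 else 0)))"

definition venkov_reduced :: "nat \<Rightarrow> (nat \<Rightarrow> nat \<Rightarrow> real) \<Rightarrow> bool" where
  "venkov_reduced n S \<longleftrightarrow> (\<forall>g. GL_Z n g \<longrightarrow> trace_n n S \<le> trace_n n (congr_n n g S))"

definition Zn :: "nat \<Rightarrow> (nat \<Rightarrow> int) set" where
  "Zn n = {v. \<forall>k\<ge>n. v k = 0}"

definition Z_basis :: "nat \<Rightarrow> (nat \<Rightarrow> nat \<Rightarrow> int) \<Rightarrow> bool" where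
  "Z_basis n b \<longleftrightarrow> (\<forall>i<n. b i \<in> Zn n) \<and>
     (\<forall>v\<in>Zn n. \<exists>!c. (\<forall>i\<ge>n. c i = 0) \<and> v = (\<lambda>k. \<Sum>i<n. c i * b i k))"

definition primitive :: "nat \<Rightarrow> (nat \<Rightarrow> int) list \<Rightarrow> bool" where
  "primitive n vs \<longleftrightarrow> (\<exists>b. Z_basis n b \<and> (\<forall>i<length vs. b i = vs ! i))"

definition unit_vec :: "nat \<Rightarrow> nat \<Rightarrow> int" where
  "unit_vec i = (\<lambda>k. if k = i then 1 else 0)"

definition minkowski_reduced :: "nat \<Rightarrow> (nat \<Rightarrow> nat \<Rightarrow> real) \<Rightarrow> bool" where
  "minkowski_reduced n S \<longleftrightarrow> (\<forall>i<n.
     (let Q = {qform n S (\<lambda>k. real_of_int (v k)) | v. v \<in> Zn n \<and>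
                 primitive n (map unit_vec [0..<i] @ [v])}
      in S i i \<in> Q \<and> (\<forall>x\<in>Q. S i i \<le> x)))"

end

theory Submission
  imports Defs "HOL-Library.Function_Algebras"
begin

(* For S with nondecreasing diagonal, the key property is that S_dd <= x^T S x for every
   integer vector x whose last nonzero coordinate is x_d.  It implies Minkowski reduction, since a
   vector completing e_0, ..., e_(i-1) to a primitive set has a nonzero coordinate at or after i.  It
   implies Venkov reduction: the rows of g in GL_n(Z) are linearly independent, so at most k of them
   vanish from coordinate k on, and summing the bounds row by row gives tr(g S g^T) >= tr S.
   Conversely, both reductions give the property for x whose last nonzero coordinate is 1: Minkowski
   reduction directly, Venkov reduction by comparing with g S g^T for the identity matrix g with row
   d replaced by x.  This is where n <= 4 enters: if the last coordinate is c with |c| >= 2, rounding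
   the first d coordinates of x/c to integers raises the form by at most (S_00 + ... + S_(d-1)(d-1))/4
   <= 3/4 S_dd, whence x^T S x >= c^2 S_dd / 4 >= S_dd.  Since Venkov reduction is invariant under
   permuting coordinates, sorting the diagonal reduces the theorem to this situation. *)

definition unit_rvec :: "nat \<Rightarrow> nat \<Rightarrow> real" where
  "unit_rvec i = (\<lambda>k. if k = i then 1 else 0)"

lemma of_int_unit_vec: "(\<lambda>k. real_of_int (unit_vec i k)) = unit_rvec i"
  by (auto simp: unit_vec_def unit_rvec_def)

lemma unit_vec_Zn: "i < n \<Longrightarrow> unit_vec i \<in> Zn n"
  by (auto simp: unit_vec_def Zn_def)

lemma sum_fun_apply: "finite A \<Longrightarrow> (\<Sum>l\<in>A. (F l :: 'a \<Rightarrow> 'b::comm_monoid_add)) x = (\<Sum>l\<in>A. F l x)"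
  by (induction A rule: finite_induct) auto

lemma qform_unit_rvec: "k < n \<Longrightarrow> qform n S (unit_rvec k) = S k k"
  unfolding qform_def unit_rvec_def
  by (simp add: if_distrib[of "\<lambda>x. x * _"] if_distrib[of "\<lambda>x. _ * x"] cong: if_cong)

lemma qform_cong: "(\<And>l. l < n \<Longrightarrow> x l = y l) \<Longrightarrow> qform n S x = qform n S y"
  unfolding qform_def by (intro sum.cong) auto

lemma qform_cong_matrix: "(\<And>i j. i < n \<Longrightarrow> j < n \<Longrightarrow> S i j = T i j) \<Longrightarrow> qform n S = qform n T"
  unfolding qform_def by (intro ext sum.cong refl) auto

lemma qform_scale: "qform n S (\<lambda>l. c * v l) = c\<^sup>2 * qform n S v"
  unfolding qform_def by (simp add: sum_distrib_left power2_eq_square mult_ac)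

lemma qform_add_scaled:
  "qform n S (\<lambda>l. u l + t * w l) = qform n S u
     + t * (\<Sum>i<n. \<Sum>j<n. u i * S i j * w j + w i * S i j * u j) + t\<^sup>2 * qform n S w"
  unfolding qform_def by (simp add: algebra_simps sum.distrib sum_distrib_left power2_eq_square)

lemma trace_congr_n: "trace_n n (congr_n n g S) = (\<Sum>j<n. qform n S (g j))"
  unfolding trace_n_def congr_n_def mat_mult_n_def transpose_n_def qform_def
proof (rule sum.cong[OF refl])
  fix j
  show "(\<Sum>k<n. (\<Sum>l<n. g j l * S l k) * g j k) = (\<Sum>i<n. \<Sum>k<n. g j i * S i k * g j k)"
    by (simp add: sum_distrib_right) (rule sum.swap)
qed

lemma posdef_diag_pos:
  assumes "posdef_n n S" "j < n"
  shows "0 < S j j"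
proof -
  have "unit_rvec j j \<noteq> 0" by (simp add: unit_rvec_def)
  then show ?thesis
    using assms qform_unit_rvec[of j n S] unfolding posdef_n_def by metis
qed

subsection \<open>Rounding to integer coordinates\<close>

lemma quadratic_round:
  fixes A L C t :: real
  assumes "0 \<le> C"
  shows "\<exists>m::int. A + of_int m * L + (of_int m)\<^sup>2 * C \<le> A + t * L + t\<^sup>2 * C + C / 4"
proof -
  let ?p = "\<lambda>s::real. A + s * L + s\<^sup>2 * C"
  define f where "f = real_of_int \<lfloor>t\<rfloor>"
  define a where "a = t - f"
  have a: "0 \<le> a" "a \<le> 1"
    unfolding a_def f_def by linarith+
  have convex: "(1 - a) * ?p f + a * ?p (f + 1) = ?p t + a * (1 - a) * C"
    by (simp add: a_def algebra_simps power2_eq_square)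
  have "a * (1 - a) \<le> 1 / 4"
    using zero_le_power2[of "a - 1/2"] by (simp add: algebra_simps power2_eq_square)
  then have "a * (1 - a) * C \<le> C / 4"
    using mult_right_mono[OF _ assms, of "a * (1 - a)" "1 / 4"] by simp
  moreover have "min (?p f) (?p (f + 1)) \<le> (1 - a) * ?p f + a * ?p (f + 1)"
  proof -
    have "min (?p f) (?p (f + 1)) = (1 - a) * min (?p f) (?p (f + 1)) + a * min (?p f) (?p (f + 1))"
      by (simp add: algebra_simps)
    also have "\<dots> \<le> (1 - a) * ?p f + a * ?p (f + 1)"
      using a by (intro add_mono mult_left_mono) auto
    finally show ?thesis .
  qed
  ultimately have "min (?p f) (?p (f + 1)) \<le> ?p t + C / 4"
    using convex by linarith
  then consider "?p f \<le> ?p t + C / 4" | "?p (f + 1) \<le> ?p t + C / 4"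
    by linarith
  then show ?thesis
  proof cases
    case 1
    then show ?thesis unfolding f_def by blast
  next
    case 2
    then have "?p (of_int (\<lfloor>t\<rfloor> + 1)) \<le> ?p t + C / 4"
      unfolding f_def by simp
    then show ?thesis by blast
  qed
qed

lemma qform_round_coord:
  assumes "j < n" "0 \<le> S j j"
  shows "\<exists>m::int. qform n S (u(j := of_int m)) \<le> qform n S u + S j j / 4"
proof -
  define w where "w = u(j := 0)"
  define L where "L = (\<Sum>i<n. \<Sum>k<n. w i * S i k * unit_rvec j k + unit_rvec j i * S i k * w k)"
  have q: "qform n S (u(j := t)) = qform n S w + t * L + t\<^sup>2 * S j j" for t
  proof -
    have "u(j := t) = (\<lambda>l. w l + t * unit_rvec j l)"
      by (auto simp: w_def unit_rvec_def)
    then show ?thesis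
      by (simp add: qform_add_scaled L_def qform_unit_rvec[OF assms(1)])
  qed
  obtain m :: int
    where "qform n S w + of_int m * L + (of_int m)\<^sup>2 * S j j \<le> qform n S w + u j * L + (u j)\<^sup>2 * S j j + S j j / 4"
    using quadratic_round[OF assms(2)] by blast
  then have "qform n S (u(j := of_int m)) \<le> qform n S (u(j := u j)) + S j j / 4"
    unfolding q .
  then show ?thesis
    by (auto simp only: fun_upd_triv)
qed

lemma qform_round_prefix:
  assumes "m \<le> n" "\<forall>j<m. 0 \<le> S j j"
  shows "\<exists>z. (\<forall>j<m. z j \<in> \<int>) \<and> (\<forall>j\<ge>m. z j = u j) \<and>
           qform n S z \<le> qform n S u + (\<Sum>j<m. S j j) / 4"
  using assms
proof (induction m)
  case 0
  show ?case by auto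
next
  case (Suc m)
  then obtain z where z: "\<forall>j<m. z j \<in> \<int>" "\<forall>j\<ge>m. z j = u j"
    "qform n S z \<le> qform n S u + (\<Sum>j<m. S j j) / 4"
    by auto
  obtain k :: int where k: "qform n S (z(m := of_int k)) \<le> qform n S z + S m m / 4"
    using qform_round_coord[of m n S z] Suc.prems by auto
  show ?case
  proof (intro exI conjI)
    show "\<forall>j<Suc m. (z(m := of_int k)) j \<in> \<int>"
      using z(1) by (auto simp: less_Suc_eq)
    show "\<forall>j\<ge>Suc m. (z(m := of_int k)) j = u j"
      using z(2) by auto
    show "qform n S (z(m := of_int k)) \<le> qform n S u + (\<Sum>j<Suc m. S j j) / 4"
      using z(3) k by (simp add: add_divide_distrib)
  qed
qed

subsection \<open>Integer vectors by their last nonzero coordinate\<close>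

definition int_vec :: "nat \<Rightarrow> (nat \<Rightarrow> real) \<Rightarrow> bool" where
  "int_vec n x \<longleftrightarrow> (\<forall>l<n. x l \<in> \<int>)"

definition last_nonzero :: "nat \<Rightarrow> (nat \<Rightarrow> real) \<Rightarrow> nat \<Rightarrow> bool" where
  "last_nonzero n x d \<longleftrightarrow> d < n \<and> x d \<noteq> 0 \<and> (\<forall>l. d < l \<longrightarrow> l < n \<longrightarrow> x l = 0)"

definition diag_min_monic :: "nat \<Rightarrow> (nat \<Rightarrow> nat \<Rightarrow> real) \<Rightarrow> bool" where
  "diag_min_monic n S \<longleftrightarrow>
     (\<forall>x d. int_vec n x \<longrightarrow> last_nonzero n x d \<longrightarrow> x d = 1 \<longrightarrow> S d d \<le> qform n S x)"

definition diag_min :: "nat \<Rightarrow> (nat \<Rightarrow> nat \<Rightarrow> real) \<Rightarrow> bool" where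
  "diag_min n S \<longleftrightarrow> (\<forall>x d. int_vec n x \<longrightarrow> last_nonzero n x d \<longrightarrow> S d d \<le> qform n S x)"

lemma last_nonzero_exists:
  assumes "i < n" "x i \<noteq> 0"
  obtains d where "last_nonzero n x d" "i \<le> d"
proof -
  let ?N = "{l. l < n \<and> x l \<noteq> 0}"
  have fin: "finite ?N" by simp
  have i: "i \<in> ?N" using assms by simp
  define d where "d = Max ?N"
  have "d \<in> ?N"
    using Max_in[OF fin] i unfolding d_def by blast
  moreover have "i \<le> d"
    unfolding d_def by (rule Max_ge[OF fin i])
  moreover have "x l = 0" if "d < l" "l < n" for l
  proof (rule ccontr)
    assume "x l \<noteq> 0"
    with that(2) have "l \<le> d"
      unfolding d_def by (intro Max_ge[OF fin]) simp
    with that(1) show False by simp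
  qed
  ultimately show thesis
    using that[of d] unfolding last_nonzero_def by blast
qed

lemma diag_min_monic_real:
  assumes M: "diag_min_monic n S" and mono: "mono_on {..<n} (\<lambda>i. S i i)"
    and pos: "\<forall>j<n. 0 \<le> S j j" and last: "last_nonzero n v d" and lead: "v d = 1"
  shows "(4 - real d) * S d d \<le> 4 * qform n S v"
proof -
  have d: "d < n" using last by (simp add: last_nonzero_def)
  obtain z where z_int: "\<forall>j<d. z j \<in> \<int>" and z_tail: "\<forall>j\<ge>d. z j = v j"
    and z_le: "qform n S z \<le> qform n S v + (\<Sum>j<d. S j j) / 4"
    using qform_round_prefix[of d n S v] d pos by auto
  have "int_vec n z"
    unfolding int_vec_def
  proof (intro allI impI)
    fix l assume "l < n"
    consider "l < d" | "l = d" | "d < l" by linarith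
    then show "z l \<in> \<int>"
    proof cases
      case 1
      then show ?thesis using z_int by simp
    next
      case 2
      then show ?thesis using z_tail lead by simp
    next
      case 3
      then show ?thesis using z_tail last \<open>l < n\<close> by (simp add: last_nonzero_def)
    qed
  qed
  moreover have "last_nonzero n z d" "z d = 1"
    using z_tail last lead by (auto simp: last_nonzero_def)
  ultimately have "S d d \<le> qform n S z"
    using M unfolding diag_min_monic_def by blast
  moreover have "(\<Sum>j<d. S j j) \<le> (\<Sum>j<d. S d d)"
    using d by (intro sum_mono mono_onD[OF mono]) auto
  moreover have "(4 - real d) * S d d = 4 * S d d - real d * S d d"
    by (simp add: algebra_simps)
  ultimately show ?thesis
    using z_le by simp
qed

lemma diag_min_if_monic:
  assumes n: "n \<le> 4" and M: "diag_min_monic n S" and mono: "mono_on {..<n} (\<lambda>i. S i i)"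
    and pos: "\<forall>j<n. 0 \<le> S j j"
  shows "diag_min n S"
  unfolding diag_min_def
proof (intro allI impI)
  fix x d assume x: "int_vec n x" and last: "last_nonzero n x d"
  have d: "d < n" "x d \<noteq> 0" using last by (auto simp: last_nonzero_def)
  obtain c :: int where c: "x d = of_int c"
    using x d(1) unfolding int_vec_def by (auto elim: Ints_cases)
  define v where "v l = x l / x d" for l
  have x_eq: "x = (\<lambda>l. x d * v l)" using d by (auto simp: v_def)
  have v: "last_nonzero n v d" "v d = 1"
    using last d(2) by (auto simp: v_def last_nonzero_def)
  have qx: "qform n S x = (x d)\<^sup>2 * qform n S v"
    by (subst x_eq) (rule qform_scale)
  show "S d d \<le> qform n S x"
  proof (cases "\<bar>c\<bar> = 1")
    case True
    then have unit: "x d * x d = 1" using c by (auto simp: abs_if split: if_splits)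
    define y where "y l = x d * x l" for l
    have "int_vec n y" using x d(1) unfolding int_vec_def y_def by auto
    moreover have "last_nonzero n y d" "y d = 1"
      using last unit by (auto simp: y_def last_nonzero_def)
    ultimately have "S d d \<le> qform n S y" using M unfolding diag_min_monic_def by blast
    also have "qform n S y = qform n S x"
      using qform_scale[of n S "x d" x] unit unfolding y_def by (simp add: power2_eq_square)
    finally show ?thesis .
  next
    case False
    then have "2 \<le> \<bar>x d\<bar>" using c d(2) by simp
    then have four: "4 \<le> (x d)\<^sup>2" using power_mono[of 2 "\<bar>x d\<bar>" 2] by simp
    have "(4 - real d) * S d d \<le> 4 * qform n S v"
      using diag_min_monic_real[OF M mono pos v] .
    moreover have "S d d \<le> (4 - real d) * S d d"
    proof -
      have "1 \<le> 4 - real d" using n d(1) by simp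
      then show ?thesis using mult_right_mono[of 1 "4 - real d" "S d d"] pos d(1) by simp
    qed
    ultimately have "S d d \<le> 4 * qform n S v" "0 \<le> qform n S v"
      using pos d(1) by auto
    then show ?thesis using qx mult_right_mono[OF four, of "qform n S v"] by simp
  qed
qed

subsection \<open>Venkov reduction\<close>

lemma sum_le_sum_of_card_le:
  fixes f :: "'a \<Rightarrow> nat" and D :: "nat \<Rightarrow> 'b::ordered_comm_monoid_add"
  assumes "finite A" "\<forall>j\<in>A. f j < N" "\<forall>k. card {j\<in>A. f j < k} \<le> k" and mono: "mono_on {..<N} D"
  shows "(\<Sum>k<card A. D k) \<le> (\<Sum>j\<in>A. D (f j))"
  using assms(1-3)
proof (induction "card A" arbitrary: A)
  case 0
  then show ?case by simp
next
  case (Suc m)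
  then have "Max (f ` A) \<in> f ` A"
    by (intro Max_in) auto
  then obtain j0 where j0: "j0 \<in> A" "f j0 = Max (f ` A)"
    by (metis imageE)
  then have max: "f j \<le> f j0" if "j \<in> A" for j
    using that Suc.prems(1) by simp
  have "m \<le> f j0"
  proof (rule ccontr)
    assume "\<not> m \<le> f j0"
    with max have "{j\<in>A. f j < m} = A" by force
    then show False using Suc.prems(3) Suc.hyps(2) by (metis Suc_n_not_le_n)
  qed
  have count: "card {j\<in>A - {j0}. f j < k} \<le> k" for k
  proof -
    have "card {j\<in>A - {j0}. f j < k} \<le> card {j\<in>A. f j < k}"
      using Suc.prems(1) by (intro card_mono) auto
    then show ?thesis using Suc.prems(3) le_trans by blast
  qed
  have "card (A - {j0}) = m"
    using Suc.hyps(2) Suc.prems(1) j0(1) by simp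
  then have "(\<Sum>k<m. D k) \<le> (\<Sum>j\<in>A - {j0}. D (f j))"
    using Suc.hyps(1)[of "A - {j0}"] Suc.prems(1,2) count by auto
  moreover have "D m \<le> D (f j0)"
    using \<open>m \<le> f j0\<close> Suc.prems(2) j0(1) by (intro mono_onD[OF mono]) auto
  ultimately show ?case
    using sum.remove[OF Suc.prems(1) j0(1), of "\<lambda>j. D (f j)"] Suc.hyps(2)[symmetric]
    by (simp add: add_mono add.commute)
qed

interpretation fun_vs: vector_space "\<lambda>(c::real) (f::nat \<Rightarrow> real) x. c * f x"
  by unfold_locales (auto simp: fun_eq_iff algebra_simps)

lemma inj_unit_rvec: "inj unit_rvec"
proof (rule injI)
  fix i j assume "unit_rvec i = unit_rvec j"
  then have "unit_rvec i i = unit_rvec j i" by simp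
  then show "i = j" by (simp add: unit_rvec_def split: if_splits)
qed

lemma independent_unit_rvec:
  assumes "finite J"
  shows "fun_vs.independent (unit_rvec ` J)"
proof (rule fun_vs.independent_if_scalars_zero)
  show "finite (unit_rvec ` J)" using assms by simp
next
  fix c v
  assume zero: "(\<Sum>w\<in>unit_rvec ` J. (\<lambda>x. c w * w x)) = 0" and "v \<in> unit_rvec ` J"
  then obtain j where j: "j \<in> J" "v = unit_rvec j" by auto
  have inj: "inj_on unit_rvec J"
    using inj_unit_rvec by (rule inj_on_subset) simp
  have "0 = (\<Sum>w\<in>unit_rvec ` J. c w * w j)"
    using fun_cong[OF zero, of j] assms by (simp add: sum_fun_apply)
  also have "\<dots> = (\<Sum>i\<in>J. if j = i then c (unit_rvec i) else 0)"
    unfolding sum.reindex[OF inj] by (intro sum.cong) (auto simp: unit_rvec_def)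
  also have "\<dots> = c v"
    using assms j by simp
  finally show "c v = 0" by simp
qed

lemma card_rows_supported_le:
  assumes gh: "is_identity_n n (mat_mult_n n g h)"
  shows "card {j. j < n \<and> (\<forall>l. k \<le> l \<longrightarrow> l < n \<longrightarrow> g j l = 0)} \<le> k"
proof (cases "k \<le> n")
  case False
  have "card {j. j < n \<and> (\<forall>l. k \<le> l \<longrightarrow> l < n \<longrightarrow> g j l = 0)} \<le> card {..<n}"
    by (intro card_mono) auto
  then show ?thesis using False by simp
next
  case True
  define J where "J = {j. j < n \<and> (\<forall>l. k \<le> l \<longrightarrow> l < n \<longrightarrow> g j l = 0)}"
  define hrow where "hrow l m = (if m < n then h l m else 0)" for l m
  have expand: "unit_rvec j = (\<Sum>l<k. (\<lambda>m. g j l * hrow l m))" if "j \<in> J" for j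
  proof
    fix m
    have j: "j < n" "\<forall>l. k \<le> l \<longrightarrow> l < n \<longrightarrow> g j l = 0"
      using that by (auto simp: J_def)
    show "unit_rvec j m = (\<Sum>l<k. (\<lambda>m. g j l * hrow l m)) m"
    proof (cases "m < n")
      case True
      have "(\<Sum>l<k. g j l * h l m) = (\<Sum>l<n. g j l * h l m)"
        using \<open>k \<le> n\<close> j(2) by (intro sum.mono_neutral_left) auto
      also have "\<dots> = unit_rvec j m"
        using gh j(1) True unfolding is_identity_n_def mat_mult_n_def unit_rvec_def by auto
      finally show ?thesis
        using True by (simp add: sum_fun_apply hrow_def)
    next
      case False
      then show ?thesis using j(1) by (simp add: sum_fun_apply hrow_def unit_rvec_def)
    qed
  qed
  have "unit_rvec ` J \<subseteq> fun_vs.span (hrow ` {..<k})"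
  proof
    fix v assume "v \<in> unit_rvec ` J"
    then obtain j where "j \<in> J" "v = unit_rvec j" by auto
    moreover have "(\<Sum>l<k. (\<lambda>m. g j l * hrow l m)) \<in> fun_vs.span (hrow ` {..<k})"
      by (intro fun_vs.span_sum fun_vs.span_scale fun_vs.span_base) auto
    ultimately show "v \<in> fun_vs.span (hrow ` {..<k})" using expand by simp
  qed
  then have "card (unit_rvec ` J) \<le> card (hrow ` {..<k})"
    using fun_vs.independent_span_bound independent_unit_rvec[of J] by (simp add: J_def)
  also have "\<dots> \<le> k"
    using card_image_le[of "{..<k}" hrow] by simp
  finally show ?thesis
    using card_image[OF inj_on_subset[OF inj_unit_rvec]] by (simp add: J_def)
qed

lemma venkov_reduced_if_diag_min:
  assumes P: "diag_min n S" and mono: "mono_on {..<n} (\<lambda>i. S i i)"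
  shows "venkov_reduced n S"
  unfolding venkov_reduced_def
proof (intro allI impI)
  fix g assume "GL_Z n g"
  then obtain h where g_int: "int_matrix_n n g" and gh: "is_identity_n n (mat_mult_n n g h)"
    unfolding GL_Z_def by blast
  have "\<exists>d. last_nonzero n (g j) d" if "j < n" for j
  proof -
    have "(\<Sum>l<n. g j l * h l j) \<noteq> 0"
      using gh that by (simp add: is_identity_n_def mat_mult_n_def)
    then obtain l where "l < n" "g j l \<noteq> 0"
      by (metis (no_types, lifting) lessThan_iff mult_zero_left sum.neutral)
    then show ?thesis by (metis last_nonzero_exists)
  qed
  then obtain deg where deg: "\<And>j. j < n \<Longrightarrow> last_nonzero n (g j) (deg j)"
    by metis
  have row_bound: "S (deg j) (deg j) \<le> qform n S (g j)" if "j < n" for j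
    using P deg[OF that] g_int that unfolding diag_min_def int_vec_def int_matrix_n_def by blast
  have count: "card {j\<in>{..<n}. deg j < k} \<le> k" for k
  proof -
    have "{j\<in>{..<n}. deg j < k} \<subseteq> {j. j < n \<and> (\<forall>l. k \<le> l \<longrightarrow> l < n \<longrightarrow> g j l = 0)}"
      using deg by (auto simp: last_nonzero_def)
    then have "card {j\<in>{..<n}. deg j < k} \<le> card {j. j < n \<and> (\<forall>l. k \<le> l \<longrightarrow> l < n \<longrightarrow> g j l = 0)}"
      by (intro card_mono) auto
    then show ?thesis using card_rows_supported_le[OF gh, of k] by linarith
  qed
  have "trace_n n S = (\<Sum>k<n. S k k)"
    by (simp add: trace_n_def)
  also have "\<dots> \<le> (\<Sum>j<n. S (deg j) (deg j))"
    using sum_le_sum_of_card_le[of "{..<n}" deg n] count deg mono by (auto simp: last_nonzero_def)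
  also have "\<dots> \<le> (\<Sum>j<n. qform n S (g j))"
    using row_bound by (intro sum_mono) simp
  also have "\<dots> = trace_n n (congr_n n g S)"
    by (rule trace_congr_n[symmetric])
  finally show "trace_n n S \<le> trace_n n (congr_n n g S)" .
qed

definition row_replace :: "nat \<Rightarrow> (nat \<Rightarrow> real) \<Rightarrow> nat \<Rightarrow> nat \<Rightarrow> real" where
  "row_replace d w = (\<lambda>k l. if k = d then w l else unit_rvec k l)"

lemma mat_mult_row_replace:
  assumes "d < n" "i < n" "j < n" "w d = 1"
  shows "mat_mult_n n (row_replace d w) (row_replace d w') i j
           = (if i = d then w' j + (if j = d then 0 else w j) else unit_rvec i j)"
proof (cases "i = d")
  case False
  have "mat_mult_n n (row_replace d w) (row_replace d w') i j
          = (\<Sum>k<n. if k = i then row_replace d w' k j else 0)"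
    unfolding mat_mult_n_def using False by (intro sum.cong) (auto simp: row_replace_def unit_rvec_def)
  then show ?thesis
    using False assms(2) by (simp add: row_replace_def)
next
  case True
  have "mat_mult_n n (row_replace d w) (row_replace d w') i j
          = w d * w' j + (\<Sum>k\<in>{..<n}-{d}. w k * unit_rvec k j)"
    unfolding mat_mult_n_def using True assms(1) by (simp add: sum.remove row_replace_def)
  also have "(\<Sum>k\<in>{..<n}-{d}. w k * unit_rvec k j) = (\<Sum>k\<in>{..<n}-{d}. if k = j then w k else 0)"
    by (intro sum.cong) (auto simp: unit_rvec_def)
  finally show ?thesis
    using True assms(3,4) by simp
qed

lemma GL_Z_row_replace:
  assumes d: "d < n" and z: "int_vec n z" "z d = 1"
  shows "GL_Z n (row_replace d z)"
proof -
  define z' where "z' l = (if l = d then 1 else - z l)" for l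
  have "is_identity_n n (mat_mult_n n (row_replace d z) (row_replace d z'))"
    "is_identity_n n (mat_mult_n n (row_replace d z') (row_replace d z))"
    using d z(2) by (auto simp: is_identity_n_def mat_mult_row_replace z'_def unit_rvec_def)
  moreover have "int_matrix_n n (row_replace d z)" "int_matrix_n n (row_replace d z')"
    using z(1) by (auto simp: int_matrix_n_def int_vec_def row_replace_def unit_rvec_def z'_def)
  ultimately show ?thesis
    unfolding GL_Z_def by blast
qed

lemma trace_congr_row_replace:
  assumes "d < n"
  shows "trace_n n (congr_n n (row_replace d z) S) = trace_n n S - S d d + qform n S z"
proof -
  have "trace_n n (congr_n n (row_replace d z) S)
          = qform n S z + (\<Sum>k\<in>{..<n}-{d}. qform n S (unit_rvec k))"
    unfolding trace_congr_n using assms by (simp add: sum.remove row_replace_def)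
  also have "(\<Sum>k\<in>{..<n}-{d}. qform n S (unit_rvec k)) = (\<Sum>k\<in>{..<n}-{d}. S k k)"
    by (intro sum.cong) (auto simp: qform_unit_rvec)
  also have "(\<Sum>k\<in>{..<n}-{d}. S k k) = trace_n n S - S d d"
    unfolding trace_n_def using assms by (simp add: sum_diff1)
  finally show ?thesis by simp
qed

lemma diag_min_monic_if_venkov:
  assumes V: "venkov_reduced n S"
  shows "diag_min_monic n S"
  unfolding diag_min_monic_def
proof (intro allI impI)
  fix z d assume z: "int_vec n z" and last: "last_nonzero n z d" and lead: "z d = 1"
  have d: "d < n" using last by (simp add: last_nonzero_def)
  have "trace_n n S \<le> trace_n n (congr_n n (row_replace d z) S)"
    using V GL_Z_row_replace[OF d z lead] unfolding venkov_reduced_def by blast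
  then show "S d d \<le> qform n S z"
    unfolding trace_congr_row_replace[OF d] by simp
qed

subsection \<open>Minkowski reduction\<close>

lemma sum_swapped_unit_basis:
  fixes c v :: "nat \<Rightarrow> int"
  assumes "i < n" "m < n"
  defines "b \<equiv> (\<lambda>k. if k = i then v else if k = m then unit_vec i else unit_vec k)"
  shows "(\<Sum>k<n. c k * b k l) = c i * v l + (if m \<noteq> i \<and> l = i then c m else 0)
           + (if l < n \<and> l \<noteq> i \<and> l \<noteq> m then c l else 0)"
proof -
  have "(\<Sum>k<n. c k * b k l) = c i * v l + (\<Sum>k\<in>{..<n}-{i}. c k * b k l)"
    using assms(1) by (simp add: sum.remove b_def)
  also have "(\<Sum>k\<in>{..<n}-{i}. c k * b k l) = (if m \<noteq> i \<and> l = i then c m else 0)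
           + (if l < n \<and> l \<noteq> i \<and> l \<noteq> m then c l else 0)"
  proof (cases "m = i")
    case True
    have "(\<Sum>k\<in>{..<n}-{i}. c k * b k l) = (\<Sum>k\<in>{..<n}-{i}. if k = l then c k else 0)"
      using True by (intro sum.cong) (auto simp: b_def unit_vec_def)
    then show ?thesis using True by auto
  next
    case False
    have m: "m \<in> {..<n}-{i}" using False assms(2) by auto
    have "(\<Sum>k\<in>{..<n}-{i}. c k * b k l) = c m * b m l + (\<Sum>k\<in>{..<n}-{i}-{m}. c k * b k l)"
      using sum.remove[OF _ m] by simp
    also have "(\<Sum>k\<in>{..<n}-{i}-{m}. c k * b k l) = (\<Sum>k\<in>{..<n}-{i}-{m}. if k = l then c k else 0)"
      by (intro sum.cong) (auto simp: b_def unit_vec_def)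
    finally show ?thesis using False by (auto simp: b_def unit_vec_def)
  qed
  finally show ?thesis by simp
qed

lemma Z_basis_swapped_units:
  assumes v: "v \<in> Zn n" and i: "i < n" and m: "m < n" and vm: "v m = 1"
  shows "Z_basis n (\<lambda>k. if k = i then v else if k = m then unit_vec i else unit_vec k)"
    (is "Z_basis n ?b")
  unfolding Z_basis_def
proof (intro conjI ballI allI impI)
  fix k assume "k < n"
  then show "?b k \<in> Zn n" using v i by (auto simp: Zn_def unit_vec_def)
next
  fix w assume "w \<in> Zn n"
  then have w0: "w l = 0" if "n \<le> l" for l using that by (simp add: Zn_def)
  have v0: "v l = 0" if "n \<le> l" for l using v that by (simp add: Zn_def)
  note F = sum_swapped_unit_basis[OF i m, of _ v]
  \<comment> \<open>only the basis vector v contributes to coordinate m, since v m = 1\<close>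
  define c where "c k = (if n \<le> k then 0 else if k = i then w m
                       else if k = m then w i - w m * v i else w k - w m * v k)" for k
  show "\<exists>!c. (\<forall>k\<ge>n. c k = 0) \<and> w = (\<lambda>l. \<Sum>k<n. c k * ?b k l)"
  proof (rule ex1I[of _ c])
    show "(\<forall>k\<ge>n. c k = 0) \<and> w = (\<lambda>l. \<Sum>k<n. c k * ?b k l)"
    proof (intro conjI allI impI ext)
      fix l
      show "w l = (\<Sum>k<n. c k * ?b k l)"
        unfolding F using i m vm w0 v0 by (auto simp: c_def not_le)
    qed (simp add: c_def)
  next
    fix c' assume c': "(\<forall>k\<ge>n. c' k = 0) \<and> w = (\<lambda>l. \<Sum>k<n. c' k * ?b k l)"
    then have wl: "w l = c' i * v l + (if m \<noteq> i \<and> l = i then c' m else 0)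
         + (if l < n \<and> l \<noteq> i \<and> l \<noteq> m then c' l else 0)" for l
      using F by auto
    have c'_i: "c' i = w m" using wl[of m] vm by simp
    show "c' = c"
    proof
      fix k
      show "c' k = c k"
        using c' wl[of k] wl[of i] c'_i i by (cases "n \<le> k") (auto simp: c_def)
    qed
  qed
qed

lemma primitive_unit_prefix:
  assumes v: "v \<in> Zn n" and "i \<le> m" "m < n" and vm: "v m = 1"
  shows "primitive n (map unit_vec [0..<i] @ [v])"
proof -
  have i: "i < n" using assms by simp
  let ?b = "\<lambda>k. if k = i then v else if k = m then unit_vec i else unit_vec k"
  have "Z_basis n ?b"
    using Z_basis_swapped_units[OF v i \<open>m < n\<close> vm] .
  moreover have "\<forall>k<length (map unit_vec [0..<i] @ [v]). ?b k = (map unit_vec [0..<i] @ [v]) ! k"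
    using \<open>i \<le> m\<close> by (auto simp: nth_append less_Suc_eq)
  ultimately show ?thesis unfolding primitive_def by blast
qed

lemma primitive_tail_nonzero:
  assumes p: "primitive n (map unit_vec [0..<i] @ [v])" and i: "i < n" and v: "v \<in> Zn n"
  shows "\<exists>l. i \<le> l \<and> l < n \<and> v l \<noteq> 0"
proof (rule ccontr)
  assume "\<not> ?thesis"
  with v have v0: "v l = 0" if "i \<le> l" for l
    using that by (cases "l < n") (auto simp: Zn_def)
  obtain b where Zb: "Z_basis n b"
    and b: "\<forall>k<Suc i. b k = (map unit_vec [0..<i] @ [v]) ! k"
    using p unfolding primitive_def by auto
  have b_unit: "b k = unit_vec k" if "k < i" for k
    using b that by (auto simp: nth_append)
  have b_i: "b i = v"
    using b by (auto simp: nth_append)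
  define c1 where "c1 k = (if k = i then 1 else 0 :: int)" for k
  define c2 where "c2 k = (if k < i then v k else 0)" for k
  have "v = (\<lambda>l. \<Sum>k<n. c1 k * b k l)"
    using i b_i by (simp add: c1_def if_distrib[of "\<lambda>x. x * _"] cong: if_cong)
  moreover have "v = (\<lambda>l. \<Sum>k<n. c2 k * b k l)"
  proof
    fix l
    have "(\<Sum>k<n. c2 k * b k l) = (\<Sum>k<n. if k = l then c2 k else 0)"
      by (intro sum.cong) (auto simp: c2_def b_unit unit_vec_def)
    also have "\<dots> = v l"
      using v0 i by (auto simp: c2_def Zn_def not_less)
    finally show "v l = (\<Sum>k<n. c2 k * b k l)" by simp
  qed
  moreover have "\<forall>k\<ge>n. c1 k = 0" "\<forall>k\<ge>n. c2 k = 0"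
    using i by (auto simp: c1_def c2_def)
  ultimately have "c1 = c2"
    using Zb v unfolding Z_basis_def by blast
  then have "c1 i = c2 i" by simp
  then show False by (simp add: c1_def c2_def)
qed

lemma minkowski_reduced_le:
  assumes "minkowski_reduced n S" "i < n" "v \<in> Zn n" "primitive n (map unit_vec [0..<i] @ [v])"
  shows "S i i \<le> qform n S (\<lambda>k. real_of_int (v k))"
  using assms unfolding minkowski_reduced_def Let_def by blast

lemma minkowski_reducedI:
  assumes "\<And>i v. i < n \<Longrightarrow> v \<in> Zn n \<Longrightarrow> primitive n (map unit_vec [0..<i] @ [v])
             \<Longrightarrow> S i i \<le> qform n S (\<lambda>k. real_of_int (v k))"
  shows "minkowski_reduced n S"
  unfolding minkowski_reduced_def Let_def
proof (intro allI impI conjI ballI)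
  fix i assume i: "i < n"
  have "primitive n (map unit_vec [0..<i] @ [unit_vec i])"
    using primitive_unit_prefix[OF unit_vec_Zn[OF i] order.refl i] by (simp add: unit_vec_def)
  moreover have "S i i = qform n S (\<lambda>k. real_of_int (unit_vec i k))"
    by (simp add: of_int_unit_vec qform_unit_rvec[OF i])
  ultimately show "S i i \<in> {qform n S (\<lambda>k. real_of_int (v k)) |v.
                     v \<in> Zn n \<and> primitive n (map unit_vec [0..<i] @ [v])}"
    using unit_vec_Zn[OF i] by blast
next
  fix i x assume "i < n" and "x \<in> {qform n S (\<lambda>k. real_of_int (v k)) |v.
                     v \<in> Zn n \<and> primitive n (map unit_vec [0..<i] @ [v])}"
  then show "S i i \<le> x" using assms by blast
qed

lemma minkowski_reduced_if_diag_min: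
  assumes P: "diag_min n S" and mono: "mono_on {..<n} (\<lambda>i. S i i)"
  shows "minkowski_reduced n S"
proof (rule minkowski_reducedI)
  fix i v assume i: "i < n" and v: "v \<in> Zn n" and p: "primitive n (map unit_vec [0..<i] @ [v])"
  obtain l where l: "i \<le> l" "l < n" "real_of_int (v l) \<noteq> 0"
    using primitive_tail_nonzero[OF p i v] by auto
  obtain d where d: "last_nonzero n (\<lambda>k. real_of_int (v k)) d" "l \<le> d"
    by (rule last_nonzero_exists[of l n "\<lambda>k. real_of_int (v k)", OF l(2,3)])
  have "S i i \<le> S d d"
    using d l by (intro mono_onD[OF mono]) (auto simp: last_nonzero_def)
  also have "S d d \<le> qform n S (\<lambda>k. real_of_int (v k))"
    using P d(1) unfolding diag_min_def int_vec_def by auto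
  finally show "S i i \<le> qform n S (\<lambda>k. real_of_int (v k))" .
qed

lemma diag_min_monic_if_minkowski:
  assumes M: "minkowski_reduced n S"
  shows "diag_min_monic n S"
  unfolding diag_min_monic_def
proof (intro allI impI)
  fix x d assume x: "int_vec n x" and last: "last_nonzero n x d" and lead: "x d = 1"
  define v where "v l = (if l < n then \<lfloor>x l\<rfloor> else 0)" for l
  have d: "d < n" using last by (simp add: last_nonzero_def)
  have v: "v \<in> Zn n" "v d = 1" using d lead by (auto simp: v_def Zn_def)
  have "S d d \<le> qform n S (\<lambda>k. real_of_int (v k))"
    using M d v(1) primitive_unit_prefix[OF v(1) order.refl d v(2)] by (rule minkowski_reduced_le)
  also have "\<dots> = qform n S x"
    using x by (intro qform_cong) (simp add: v_def int_vec_def)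
  finally show "S d d \<le> qform n S x" .
qed

lemma mono_diag_if_minkowski:
  assumes M: "minkowski_reduced n S"
  shows "mono_on {..<n} (\<lambda>i. S i i)"
proof (rule mono_onI)
  fix a b assume "a \<in> {..<n}" "b \<in> {..<n}" "a \<le> b"
  then have a: "a < n" and b: "b < n" by auto
  have "primitive n (map unit_vec [0..<a] @ [unit_vec b])"
    using primitive_unit_prefix[OF unit_vec_Zn[OF b] \<open>a \<le> b\<close> b] by (simp add: unit_vec_def)
  with M a unit_vec_Zn[OF b] have "S a a \<le> qform n S (\<lambda>k. real_of_int (unit_vec b k))"
    by (rule minkowski_reduced_le)
  also have "\<dots> = S b b"
    by (simp add: of_int_unit_vec qform_unit_rvec[OF b])
  finally show "S a a \<le> S b b" .
qed

subsection \<open>Permutations\<close>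

lemma qform_permute:
  assumes s: "\<sigma> permutes {..<n}"
  shows "qform n (\<lambda>i j. S (\<sigma> i) (\<sigma> j)) x = qform n S (\<lambda>l. x (inv \<sigma> l))"
proof -
  have reindex: "(\<Sum>j<n. F j) = (\<Sum>j<n. F (\<sigma> j))" for F :: "nat \<Rightarrow> real"
    using sum.permute[OF s, of F] by (simp add: o_def)
  have "qform n S (\<lambda>l. x (inv \<sigma> l))
          = (\<Sum>i<n. \<Sum>j<n. x (inv \<sigma> (\<sigma> i)) * S (\<sigma> i) (\<sigma> j) * x (inv \<sigma> (\<sigma> j)))"
    unfolding qform_def by (subst reindex) (intro sum.cong refl reindex)
  also have "\<dots> = qform n (\<lambda>i j. S (\<sigma> i) (\<sigma> j)) x"
    unfolding qform_def permutes_inverses[OF s] ..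
  finally show ?thesis ..
qed

lemma trace_permute:
  assumes "\<sigma> permutes {..<n}"
  shows "trace_n n (\<lambda>i j. S (\<sigma> i) (\<sigma> j)) = trace_n n S"
  unfolding trace_n_def using sum.permute[OF assms, of "\<lambda>i. S i i"] by (simp add: o_def)

lemma GL_Z_permute_cols:
  assumes GL: "GL_Z n g" and t: "\<tau> permutes {..<n}"
  shows "GL_Z n (\<lambda>j l. g j (\<tau> l))"
proof -
  obtain h where g_int: "int_matrix_n n g" and h_int: "int_matrix_n n h"
    and gh: "is_identity_n n (mat_mult_n n g h)" and hg: "is_identity_n n (mat_mult_n n h g)"
    using GL unfolding GL_Z_def by blast
  have t_lt: "\<tau> l < n" if "l < n" for l
    using permutes_in_image[OF t] that by simp
  have t_eq: "\<tau> i = \<tau> j \<longleftrightarrow> i = j" for i j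
    using permutes_inj[OF t] by (auto dest: injD)
  have "mat_mult_n n (\<lambda>j l. g j (\<tau> l)) (\<lambda>l m. h (\<tau> l) m) i j = mat_mult_n n g h i j" for i j
    unfolding mat_mult_n_def using sum.permute[OF t, of "\<lambda>k. g i k * h k j"] by (simp add: o_def)
  moreover have "mat_mult_n n (\<lambda>l m. h (\<tau> l) m) (\<lambda>j l. g j (\<tau> l)) i j = mat_mult_n n h g (\<tau> i) (\<tau> j)"
    for i j
    by (simp add: mat_mult_n_def)
  ultimately have "is_identity_n n (mat_mult_n n (\<lambda>j l. g j (\<tau> l)) (\<lambda>l m. h (\<tau> l) m))"
    "is_identity_n n (mat_mult_n n (\<lambda>l m. h (\<tau> l) m) (\<lambda>j l. g j (\<tau> l)))"
    using gh hg t_lt t_eq unfolding is_identity_n_def by auto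
  moreover have "int_matrix_n n (\<lambda>j l. g j (\<tau> l))" "int_matrix_n n (\<lambda>l m. h (\<tau> l) m)"
    using g_int h_int t_lt unfolding int_matrix_n_def by auto
  ultimately show ?thesis
    unfolding GL_Z_def by blast
qed

lemma venkov_reduced_permute:
  assumes V: "venkov_reduced n S" and s: "\<sigma> permutes {..<n}"
  shows "venkov_reduced n (\<lambda>i j. S (\<sigma> i) (\<sigma> j))"
  unfolding venkov_reduced_def
proof (intro allI impI)
  fix g assume "GL_Z n g"
  then have GL': "GL_Z n (\<lambda>j l. g j (inv \<sigma> l))"
    using GL_Z_permute_cols permutes_inv[OF s] by blast
  have "trace_n n (\<lambda>i j. S (\<sigma> i) (\<sigma> j)) = trace_n n S"
    by (rule trace_permute[OF s])
  also have "\<dots> \<le> trace_n n (congr_n n (\<lambda>j l. g j (inv \<sigma> l)) S)"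
    using V GL' unfolding venkov_reduced_def by blast
  also have "\<dots> = trace_n n (congr_n n g (\<lambda>i j. S (\<sigma> i) (\<sigma> j)))"
    unfolding trace_congr_n qform_permute[OF s] ..
  finally show "trace_n n (\<lambda>i j. S (\<sigma> i) (\<sigma> j)) \<le> trace_n n (congr_n n g (\<lambda>i j. S (\<sigma> i) (\<sigma> j)))" .
qed

lemma venkov_reduced_permute_iff:
  assumes s: "\<sigma> permutes {..<n}"
  shows "venkov_reduced n (\<lambda>i j. S (\<sigma> i) (\<sigma> j)) \<longleftrightarrow> venkov_reduced n S"
proof
  assume "venkov_reduced n (\<lambda>i j. S (\<sigma> i) (\<sigma> j))"
  from venkov_reduced_permute[OF this permutes_inv[OF s]]
  show "venkov_reduced n S"
    unfolding permutes_inverses[OF s] .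
qed (rule venkov_reduced_permute[OF _ s])

lemma congr_perm_matrix:
  assumes g: "\<forall>i<n. \<forall>j<n. g i j = (if \<sigma> i = j then 1 else 0)" and s: "\<sigma> permutes {..<n}"
    and i: "i < n" and j: "j < n"
  shows "congr_n n g S i j = S (\<sigma> i) (\<sigma> j)"
proof -
  have s_lt: "\<sigma> i < n" "\<sigma> j < n"
    using permutes_in_image[OF s] i j by auto
  have row: "(\<Sum>l<n. g i l * S l k) = S (\<sigma> i) k" for k
  proof -
    have "(\<Sum>l<n. g i l * S l k) = (\<Sum>l<n. if \<sigma> i = l then S l k else 0)"
      using g i by (intro sum.cong) auto
    then show ?thesis using s_lt by simp
  qed
  have "congr_n n g S i j = (\<Sum>k<n. S (\<sigma> i) k * g j k)"
    unfolding congr_n_def mat_mult_n_def transpose_n_def row ..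
  also have "\<dots> = (\<Sum>k<n. if \<sigma> j = k then S (\<sigma> i) k else 0)"
    using g j by (intro sum.cong) auto
  finally show ?thesis using s_lt by simp
qed

lemma minkowski_reduced_cong:
  assumes "\<And>i j. i < n \<Longrightarrow> j < n \<Longrightarrow> S i j = T i j"
  shows "minkowski_reduced n S \<longleftrightarrow> minkowski_reduced n T"
proof -
  have "qform n S = qform n T"
    using assms by (rule qform_cong_matrix)
  then show ?thesis
    unfolding minkowski_reduced_def Let_def using assms by (intro iff_allI) auto
qed

lemma minkowski_reduced_congr_perm_iff:
  assumes "\<forall>i<n. \<forall>j<n. g i j = (if \<sigma> i = j then 1 else 0)" and "\<sigma> permutes {..<n}"
  shows "minkowski_reduced n (congr_n n g S) \<longleftrightarrow> minkowski_reduced n (\<lambda>i j. S (\<sigma> i) (\<sigma> j))"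
  using congr_perm_matrix[OF assms] by (rule minkowski_reduced_cong)

lemma sorting_permutation:
  fixes S :: "nat \<Rightarrow> nat \<Rightarrow> real"
  obtains \<sigma> where "\<sigma> permutes {..<n}" "mono_on {..<n} (\<lambda>i. S (\<sigma> i) (\<sigma> i))"
proof -
  define xs where "xs = sort_key (\<lambda>i. S i i) [0..<n]"
  define \<sigma> where "\<sigma> i = (if i < n then xs ! i else i)" for i
  have len: "length xs = n" and dist: "distinct xs" and set: "set xs = {..<n}"
    by (auto simp: xs_def)
  have "bij_betw ((!) xs) {..<n} {..<n}"
    using bij_betw_nth[OF dist] len set by simp
  then have "bij_betw \<sigma> {..<n} {..<n}"
    by (rule bij_betw_cong[THEN iffD1, rotated]) (simp add: \<sigma>_def)
  then have "\<sigma> permutes {..<n}"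
    by (rule bij_imp_permutes) (simp add: \<sigma>_def)
  moreover have "mono_on {..<n} (\<lambda>i. S (\<sigma> i) (\<sigma> i))"
  proof (rule mono_onI)
    fix a b assume "a \<in> {..<n}" "b \<in> {..<n}" "a \<le> b"
    moreover have "sorted (map (\<lambda>i. S i i) xs)" by (simp add: xs_def)
    ultimately show "S (\<sigma> a) (\<sigma> a) \<le> S (\<sigma> b) (\<sigma> b)"
      using sorted_nth_mono[of "map (\<lambda>i. S i i) xs" a b] len by (simp add: \<sigma>_def)
  qed
  ultimately show thesis by (rule that)
qed

lemma minkowski_reduced_if_venkov:
  assumes "n \<le> 4" "\<forall>j<n. 0 \<le> S j j" "mono_on {..<n} (\<lambda>i. S i i)" "venkov_reduced n S"
  shows "minkowski_reduced n S"
  using assms diag_min_if_monic diag_min_monic_if_venkov minkowski_reduced_if_diag_min by blast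

lemma venkov_reduced_if_minkowski:
  assumes "n \<le> 4" "\<forall>j<n. 0 \<le> S j j" "minkowski_reduced n S"
  shows "venkov_reduced n S"
  using assms diag_min_if_monic diag_min_monic_if_minkowski mono_diag_if_minkowski
    venkov_reduced_if_diag_min by blast

theorem mainTheorem3:
  fixes n :: nat and S :: "nat \<Rightarrow> nat \<Rightarrow> real"
  assumes "n \<le> 4" and "symmetric_n n S" and "posdef_n n S"
  shows "venkov_reduced n S \<longleftrightarrow> (\<exists>g. perm_matrix_n n g \<and> minkowski_reduced n (congr_n n g S))"
proof -
  have diag: "\<forall>j<n. 0 \<le> S (\<sigma> j) (\<sigma> j)" if "\<sigma> permutes {..<n}" for \<sigma>
    using posdef_diag_pos[OF assms(3)] permutes_in_image[OF that] by (simp add: less_imp_le)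
  show ?thesis
  proof
    assume "venkov_reduced n S"
    obtain \<sigma> where \<sigma>: "\<sigma> permutes {..<n}" and mono: "mono_on {..<n} (\<lambda>i. S (\<sigma> i) (\<sigma> i))"
      by (rule sorting_permutation)
    define g where "g i j = (if \<sigma> i = j then 1 else 0 :: real)" for i j
    have "venkov_reduced n (\<lambda>i j. S (\<sigma> i) (\<sigma> j))"
      using \<open>venkov_reduced n S\<close> venkov_reduced_permute_iff[OF \<sigma>] by blast
    with assms(1) diag[OF \<sigma>] mono have "minkowski_reduced n (\<lambda>i j. S (\<sigma> i) (\<sigma> j))"
      by (rule minkowski_reduced_if_venkov)
    then have "minkowski_reduced n (congr_n n g S)"
      using minkowski_reduced_congr_perm_iff[OF _ \<sigma>] g_def by blast
    moreover have "perm_matrix_n n g"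
      unfolding perm_matrix_n_def g_def using \<sigma> by blast
    ultimately show "\<exists>g. perm_matrix_n n g \<and> minkowski_reduced n (congr_n n g S)" by blast
  next
    assume "\<exists>g. perm_matrix_n n g \<and> minkowski_reduced n (congr_n n g S)"
    then obtain g \<sigma> where M: "minkowski_reduced n (congr_n n g S)" and \<sigma>: "\<sigma> permutes {..<n}"
      and g: "\<forall>i<n. \<forall>j<n. g i j = (if \<sigma> i = j then 1 else 0)"
      unfolding perm_matrix_n_def by blast
    have "minkowski_reduced n (\<lambda>i j. S (\<sigma> i) (\<sigma> j))"
      using M minkowski_reduced_congr_perm_iff[OF g \<sigma>] by blast
    with assms(1) diag[OF \<sigma>] have "venkov_reduced n (\<lambda>i j. S (\<sigma> i) (\<sigma> j))"
      by (rule venkov_reduced_if_minkowski)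
    then show "venkov_reduced n S"
      using venkov_reduced_permute_iff[OF \<sigma>] by blast
  qed
qed

end
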